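(* Let $m\ge1$ and $g_1,g_2\in\Gamma_{2m}(2)$. Suppose there exist $Z_1\in g_1\cdot iC_n$, $Z_2\in g_2\cdot iC_n$ and $\gamma\in\Gamma(4m)$ with $\gamma Z_1=Z_2$. Then there exists $\alpha\in\Gamma_\ell(2)$ such that $g_2=\gamma g_1\alpha$.
   Context: $\mathbf{Sp}(2n,\mathbb R)$: real matrices $g=\begin{pmatrix}A&B\\C&D\end{pmatrix}$ with ${}^tgJg=J$, $J=\begin{pmatrix}0&I\\-I&0\end{pmatrix}$, acting on $\mathfrak h_n=\{Z\in M_n(\mathbb C):{}^tZ=Z,\mathrm{Im}Z>0\}$ by $gZ=(AZ+B)(CZ+D)^{-1}$. $\Gamma(4m)=\{\gamma\in\mathbf{Sp}(2n,\mathbb Z):\gamma\equiv I\bmod4m\}$; $\Gamma_{2m}(2)=\{\begin{pmatrix}A&B\\C&D\end{pmatrix}\in\mathbf{Sp}(2n,\mathbb Z):A,D\equiv I\bmod2,\ B,C\equiv0\bmod2m\}$; $\Gamma_\ell(2)=\{U\in\mathbf{GL}(n,\mathbb Z):U\equiv I\bmod2\}$ embedded via $U\mapsto\mathrm{diag}(U,{}^tU^{-1})$. $C_n$: positive definite symmetric real $n\times n$ matrices; $iC_n=\{iY:Y\in C_n\}$. *)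

theory Defs
  imports "HOL-Analysis.Analysis"
begin

text \<open>Real 2n x 2n matrices are indexed by the type 'n + 'n (first block Inl, second block Inr).\<close>

type_synonym 'n smat = "real^('n + 'n)^('n + 'n)"

definition blkA :: "'n::finite smat \<Rightarrow> real^'n^'n" where
  "blkA g = (\<chi> i j. g $ Inl i $ Inl j)"
definition blkB :: "'n::finite smat \<Rightarrow> real^'n^'n" where
  "blkB g = (\<chi> i j. g $ Inl i $ Inr j)"
definition blkC :: "'n::finite smat \<Rightarrow> real^'n^'n" where
  "blkC g = (\<chi> i j. g $ Inr i $ Inl j)"
definition blkD :: "'n::finite smat \<Rightarrow> real^'n^'n" where
  "blkD g = (\<chi> i j. g $ Inr i $ Inr j)"

definition blockmat :: "real^'n^'n \<Rightarrow> real^'n^'n \<Rightarrow> real^'n^'n \<Rightarrow> real^'n^'n \<Rightarrow> 'n::finite smat" where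
  "blockmat A B C D = (\<chi> i j. case i of
      Inl a \<Rightarrow> (case j of Inl b \<Rightarrow> A $ a $ b | Inr b \<Rightarrow> B $ a $ b)
    | Inr a \<Rightarrow> (case j of Inl b \<Rightarrow> C $ a $ b | Inr b \<Rightarrow> D $ a $ b))"

definition Jmat :: "'n::finite smat" where
  "Jmat = blockmat 0 (mat 1) (- mat 1) 0"

definition symplectic :: "'n::finite smat \<Rightarrow> bool" where
  "symplectic g \<longleftrightarrow> transpose g ** Jmat ** g = Jmat"

definition int_matrix :: "real^'m^'k \<Rightarrow> bool" where
  "int_matrix M \<longleftrightarrow> (\<forall>i j. M $ i $ j \<in> \<int>)"

definition congr :: "int \<Rightarrow> real \<Rightarrow> real \<Rightarrow> bool" where
  "congr N x y \<longleftrightarrow> (\<exists>k::int. x - y = of_int (N * k))"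

definition congr_mat :: "int \<Rightarrow> real^'m^'k \<Rightarrow> real^'m^'k \<Rightarrow> bool" where
  "congr_mat N M P \<longleftrightarrow> (\<forall>i j. congr N (M $ i $ j) (P $ i $ j))"

definition Sp_Z :: "'n::finite smat set" where
  "Sp_Z = {g. symplectic g \<and> int_matrix g}"

definition Gamma_princ :: "nat \<Rightarrow> 'n::finite smat set" where
  "Gamma_princ N = {g \<in> Sp_Z. congr_mat (int N) g (mat 1)}"

definition Gamma_2m_2 :: "nat \<Rightarrow> 'n::finite smat set" where
  "Gamma_2m_2 m = {g \<in> Sp_Z.
      congr_mat 2 (blkA g) (mat 1) \<and> congr_mat 2 (blkD g) (mat 1) \<and>
      congr_mat (2 * int m) (blkB g) 0 \<and> congr_mat (2 * int m) (blkC g) 0}"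

definition GL_Z :: "(real^'n^'n) set" where
  "GL_Z = {U. int_matrix U \<and> (\<exists>V. int_matrix V \<and> U ** V = mat 1 \<and> V ** U = mat 1)}"

definition Gamma_l_2 :: "(real^'n::finite^'n) set" where
  "Gamma_l_2 = {U \<in> GL_Z. congr_mat 2 U (mat 1)}"

definition embed_GL :: "real^'n^'n \<Rightarrow> 'n::finite smat" where
  "embed_GL U = blockmat U 0 0 (transpose (matrix_inv U))"

definition cmat :: "real^'m^'k \<Rightarrow> complex^'m^'k" where
  "cmat M = (\<chi> i j. complex_of_real (M $ i $ j))"

definition Im_mat :: "complex^'m^'k \<Rightarrow> real^'m^'k" where
  "Im_mat Z = (\<chi> i j. Im (Z $ i $ j))"

definition pos_def :: "real^'n^'n \<Rightarrow> bool" where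
  "pos_def Y \<longleftrightarrow> transpose Y = Y \<and> (\<forall>x. x \<noteq> 0 \<longrightarrow> x \<bullet> (Y *v x) > 0)"

definition Cn :: "(real^'n::finite^'n) set" where
  "Cn = {Y. pos_def Y}"

definition siegel :: "(complex^'n::finite^'n) set" where
  "siegel = {Z. transpose Z = Z \<and> pos_def (Im_mat Z)}"

definition iCn :: "(complex^'n::finite^'n) set" where
  "iCn = {(\<chi> i j. \<i> * (cmat Y $ i $ j)) | Y. Y \<in> Cn}"

definition sp_act :: "'n::finite smat \<Rightarrow> complex^'n^'n \<Rightarrow> complex^'n^'n" where
  "sp_act g Z = (cmat (blkA g) ** Z + cmat (blkB g)) **
                matrix_inv (cmat (blkC g) ** Z + cmat (blkD g))"

end

theory Submission
  imports Defs
begin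

text \<open>
  Put h = (\<gamma> g1)^-1 g2. Then h lies in Sp(2n,\<int>), h \<equiv> I mod 2, and h maps the point
  iY2 of iC_n to iY1. For h = [[A, B], [C, D]] this means A Y2 = Y1 D and B = -Y1 C Y2, so
  T = tC Y1 C Y2 = I - tA D is \<equiv> 0 mod 2 and, for the inner product defined by Y2, self-adjoint
  with 0 \<le> T \<le> I. Hence K = T/2 is an integral matrix of norm at most 1/2 for that inner
  product. Nonzero integral vectors have length bounded below, so some iterate of K kills every
  integral vector, and self-adjointness then forces K = 0. Thus B = C = 0 and
  h = diag(A, tA^-1) with A \<in> \<Gamma>_l(2).
\<close>

lemma matrix_add_rdistrib: "(B + C) ** A = B ** A + C ** A"
  by (vector matrix_matrix_mult_def sum.distrib[symmetric] field_simps)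

lemma matrix_minus_left: "(- B) ** (A :: 'a::ring_1^_^_) = - (B ** A)"
  by (vector matrix_matrix_mult_def sum_negf[symmetric])

lemma matrix_minus_right: "(A :: 'a::ring_1^_^_) ** (- B) = - (A ** B)"
  by (vector matrix_matrix_mult_def sum_negf[symmetric])

lemma matrix_vector_mult_uminus: "(- A) *v x = - (A *v (x :: 'a::ring_1^_))"
  by (simp add: matrix_vector_mult_def vec_eq_iff sum_negf)

lemma matrix_vector_mult_uminus_right: "A *v (- x) = - (A *v (x :: 'a::ring_1^_))"
  by (simp add: matrix_vector_mult_def vec_eq_iff sum_negf)

lemma inner_matrix_vector_transpose: "(A *v x) \<bullet> (y :: real^_) = x \<bullet> (transpose A *v y)"
  by (metis dot_lmul_matrix inner_commute transpose_matrix_vector)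

lemma inner_symmetric_matrix: "transpose Y = Y \<Longrightarrow> x \<bullet> (Y *v y) = (Y *v x) \<bullet> (y :: real^_)"
  by (simp only: inner_matrix_vector_transpose)

lemma invertible_matrix_inv:
  fixes A :: "'a::semiring_1^'n^'n"
  assumes "invertible A"
  shows "A ** matrix_inv A = mat 1" "matrix_inv A ** A = mat 1"
proof -
  have "\<exists>A'. A ** A' = mat 1 \<and> A' ** A = mat 1"
    using assms by (simp add: invertible_def)
  then have "A ** matrix_inv A = mat 1 \<and> matrix_inv A ** A = mat 1"
    unfolding matrix_inv_def by (rule someI_ex)
  then show "A ** matrix_inv A = mat 1" "matrix_inv A ** A = mat 1" by auto
qed

lemma matrix_inv_unique:
  fixes A :: "'a::semiring_1^'n^'n"
  assumes "A ** B = mat 1" "B ** A = mat 1"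
  shows "matrix_inv A = B"
proof -
  have "invertible A" using assms by (auto simp: invertible_def)
  then have "matrix_inv A = matrix_inv A ** (A ** B)" using assms by simp
  also have "\<dots> = B"
    using invertible_matrix_inv[OF \<open>invertible A\<close>] by (simp add: matrix_mul_assoc)
  finally show ?thesis .
qed

lemma pos_def_nonneg: "pos_def Y \<Longrightarrow> 0 \<le> x \<bullet> (Y *v x)"
  unfolding pos_def_def by (cases "x = 0") (auto intro: less_imp_le)

lemma pos_def_eq_0_iff: "pos_def Y \<Longrightarrow> x \<bullet> (Y *v x) = 0 \<longleftrightarrow> x = 0"
  unfolding pos_def_def by force

lemma pos_def_mult_right_cancel:
  assumes Y: "pos_def Y" and "\<And>x. (C ** Y) *v x = 0"
  shows "C = 0"
proof -
  obtain R where "Y ** R = mat 1"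
    using pos_def_eq_0_iff[OF Y] by (metis matrix_left_invertible_ker matrix_left_right_inverse
        matrix_vector_mult_0_right inner_zero_right)
  then have "C *v y = 0 *v y" for y
    using assms(2) by (metis matrix_vector_mul_assoc matrix_vector_mul_lid matrix_vector_mult_0)
  then show "C = 0" using matrix_eq by blast
qed

section \<open>Block decomposition\<close>

lemma sum_UNIV_Plus:
  "sum f (UNIV :: ('a::finite + 'b::finite) set) = (\<Sum>a\<in>UNIV. f (Inl a)) + (\<Sum>b\<in>UNIV. f (Inr b))"
  by (subst UNIV_Plus_UNIV[symmetric], subst sum.Plus) (auto simp: o_def)

lemma blk_mult:
  fixes g h :: "'n::finite smat"
  shows "blkA (g ** h) = blkA g ** blkA h + blkB g ** blkC h"
    "blkB (g ** h) = blkA g ** blkB h + blkB g ** blkD h"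
    "blkC (g ** h) = blkC g ** blkA h + blkD g ** blkC h"
    "blkD (g ** h) = blkC g ** blkB h + blkD g ** blkD h"
  by (simp_all add: blkA_def blkB_def blkC_def blkD_def matrix_matrix_mult_def vec_eq_iff sum_UNIV_Plus)

lemma blk_transpose:
  fixes g :: "'n::finite smat"
  shows "blkA (transpose g) = transpose (blkA g)" "blkB (transpose g) = transpose (blkC g)"
    "blkC (transpose g) = transpose (blkB g)" "blkD (transpose g) = transpose (blkD g)"
  by (simp_all add: blkA_def blkB_def blkC_def blkD_def transpose_def vec_eq_iff)

lemma blk_blockmat:
  "blkA (blockmat A B C D) = A" "blkB (blockmat A B C D) = B"
  "blkC (blockmat A B C D) = C" "blkD (blockmat A B C D) = D"
  by (simp_all add: blkA_def blkB_def blkC_def blkD_def blockmat_def vec_eq_iff)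

lemma blockmat_blk: "blockmat (blkA g) (blkB g) (blkC g) (blkD g) = g"
  by (simp add: blkA_def blkB_def blkC_def blkD_def blockmat_def vec_eq_iff split: sum.split)

lemma blk_eq_iff:
  "g = h \<longleftrightarrow> blkA g = blkA h \<and> blkB g = blkB h \<and> blkC g = blkC h \<and> blkD g = blkD h"
  by (metis blockmat_blk)

lemma blk_uminus:
  fixes g :: "'n::finite smat"
  shows "blkA (- g) = - blkA g" "blkB (- g) = - blkB g" "blkC (- g) = - blkC g" "blkD (- g) = - blkD g"
  by (simp_all add: blkA_def blkB_def blkC_def blkD_def vec_eq_iff)

lemma blk_mat1:
  "blkA (mat 1 :: 'n::finite smat) = mat 1" "blkB (mat 1 :: 'n::finite smat) = 0"
  "blkC (mat 1 :: 'n::finite smat) = 0" "blkD (mat 1 :: 'n::finite smat) = mat 1"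
  by (simp_all add: blkA_def blkB_def blkC_def blkD_def vec_eq_iff mat_def)

lemma blk_Jmat:
  "blkA (Jmat :: 'n::finite smat) = 0" "blkB (Jmat :: 'n::finite smat) = mat 1"
  "blkC (Jmat :: 'n::finite smat) = - mat 1" "blkD (Jmat :: 'n::finite smat) = 0"
  by (simp_all add: Jmat_def blk_blockmat)

definition blockvec :: "real^'n \<Rightarrow> real^'n \<Rightarrow> real^('n + 'n)" where
  "blockvec x y = (\<chi> i. case i of Inl a \<Rightarrow> x $ a | Inr b \<Rightarrow> y $ b)"

lemma matrix_vector_mult_blockvec:
  fixes g :: "'n::finite smat"
  shows "g *v blockvec x y = blockvec (blkA g *v x + blkB g *v y) (blkC g *v x + blkD g *v y)"
  by (simp add: blockvec_def blkA_def blkB_def blkC_def blkD_def matrix_vector_mult_def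
      vec_eq_iff sum_UNIV_Plus split: sum.split)

lemma inner_blockvec: "blockvec x y \<bullet> blockvec x' y' = x \<bullet> x' + y \<bullet> (y' :: real^'n::finite)"
  by (simp add: blockvec_def inner_vec_def sum_UNIV_Plus)

lemma Jmat_blockvec: "Jmat *v blockvec x y = blockvec y (- x)"
  by (simp add: matrix_vector_mult_blockvec blk_Jmat matrix_vector_mult_uminus)

section \<open>Symplectic matrices\<close>

lemma symplectic_blocks:
  fixes g :: "'n::finite smat"
  assumes "symplectic g"
  shows "transpose (blkA g) ** blkD g - transpose (blkC g) ** blkB g = mat 1"
proof -
  have "blkB (transpose g ** Jmat ** g) = mat 1"
    using assms by (simp add: symplectic_def blk_Jmat)
  then show ?thesis
    by (simp add: blk_mult blk_transpose blk_Jmat matrix_minus_left matrix_minus_right)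
qed

lemma symplectic_form_invariant:
  assumes "symplectic g"
  shows "(g *v p) \<bullet> (Jmat *v (g *v q)) = p \<bullet> (Jmat *v q)"
proof -
  have "(g *v p) \<bullet> (Jmat *v (g *v q)) = p \<bullet> ((transpose g ** Jmat ** g) *v q)"
    by (simp add: inner_matrix_vector_transpose matrix_vector_mul_assoc matrix_mul_assoc
        del: transpose_matrix_vector)
  then show ?thesis using assms by (simp add: symplectic_def)
qed

lemma symplectic_mult:
  assumes "symplectic g" "symplectic h"
  shows "symplectic (g ** h)"
proof -
  have "transpose (g ** h) ** Jmat ** (g ** h) = transpose h ** (transpose g ** Jmat ** g) ** h"
    by (simp add: matrix_transpose_mul matrix_mul_assoc)
  then show ?thesis using assms by (simp add: symplectic_def)
qed

lemma Jmat_square: "(Jmat :: 'n::finite smat) ** Jmat = - mat 1"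
  by (simp add: blk_eq_iff blk_mult blk_Jmat blk_uminus blk_mat1 matrix_minus_left matrix_minus_right)

definition sp_inv :: "'n::finite smat \<Rightarrow> 'n smat" where
  "sp_inv g = - (Jmat ** transpose g ** Jmat)"

lemma sp_inv_left: "symplectic g \<Longrightarrow> sp_inv g ** g = mat 1"
  unfolding sp_inv_def symplectic_def
  by (simp add: matrix_minus_left matrix_mul_assoc[symmetric] Jmat_square)

lemma sp_inv_right: "symplectic g \<Longrightarrow> g ** sp_inv g = mat 1"
  using sp_inv_left matrix_left_right_inverse by blast

lemma symplectic_sp_inv:
  assumes "symplectic g"
  shows "symplectic (sp_inv g)"
proof -
  let ?k = "sp_inv g"
  have "transpose ?k ** Jmat ** ?k = transpose ?k ** (transpose g ** Jmat ** g) ** ?k"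
    using assms by (simp add: symplectic_def)
  also have "\<dots> = transpose (g ** ?k) ** Jmat ** (g ** ?k)"
    by (simp add: matrix_transpose_mul matrix_mul_assoc)
  finally show ?thesis
    using sp_inv_right[OF assms] by (simp add: symplectic_def)
qed

section \<open>Integrality and congruences\<close>

lemma congr_refl: "congr N x x"
  unfolding congr_def by (rule exI[of _ 0]) simp

lemma congr_add: "congr N x y \<Longrightarrow> congr N x' y' \<Longrightarrow> congr N (x + x') (y + y')"
  unfolding congr_def
proof (elim exE)
  fix k k' assume "x - y = of_int (N * k)" "x' - y' = of_int (N * k')"
  then have "x + x' - (y + y') = of_int (N * (k + k'))" by (simp add: algebra_simps)
  then show "\<exists>k. x + x' - (y + y') = of_int (N * k)" ..
qed

lemma congr_uminus: "congr N x y \<Longrightarrow> congr N (- x) (- y)"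
  unfolding congr_def
proof (elim exE)
  fix k assume "x - y = of_int (N * k)"
  then have "- x - (- y) = of_int (N * (- k))" by (simp add: algebra_simps)
  then show "\<exists>k. - x - (- y) = of_int (N * k)" ..
qed

lemma congr_mult:
  assumes "x \<in> \<int>" "y' \<in> \<int>" "congr N x y" "congr N x' y'"
  shows "congr N (x * x') (y * y')"
proof -
  obtain k k' where k: "x - y = of_int (N * k)" and k': "x' - y' = of_int (N * k')"
    using assms(3,4) by (auto simp: congr_def)
  obtain a b where a: "x = of_int a" and b: "y' = of_int b"
    using assms(1,2) Ints_cases by metis
  have "x * x' - y * y' = x * (x' - y') + (x - y) * y'" by (simp add: algebra_simps)
  also have "\<dots> = of_int (N * (a * k' + k * b))" using k k' a b by (simp add: algebra_simps)
  finally show ?thesis unfolding congr_def by blast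
qed

lemma congr_sum:
  "finite A \<Longrightarrow> (\<And>i. i \<in> A \<Longrightarrow> congr N (f i) (g i)) \<Longrightarrow> congr N (sum f A) (sum g A)"
  by (induction A rule: finite_induct) (auto intro: congr_add congr_refl)

lemma congr_dvd: "congr (N * M) x y \<Longrightarrow> congr N x y"
  unfolding congr_def
proof (elim exE)
  fix k assume "x - y = of_int (N * M * k)"
  then have "x - y = of_int (N * (M * k))" by (simp add: mult.assoc)
  then show "\<exists>k. x - y = of_int (N * k)" ..
qed

lemma int_matrix_mult: "int_matrix A \<Longrightarrow> int_matrix B \<Longrightarrow> int_matrix (A ** B)"
  unfolding int_matrix_def matrix_matrix_mult_def by (auto intro!: Ints_sum Ints_mult)

lemma int_matrix_transpose: "int_matrix A \<Longrightarrow> int_matrix (transpose A)"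
  unfolding int_matrix_def transpose_def by auto

lemma int_matrix_uminus: "int_matrix A \<Longrightarrow> int_matrix (- A)"
  unfolding int_matrix_def by auto

lemma int_matrix_mat1: "int_matrix (mat 1)"
  unfolding int_matrix_def mat_def by auto

lemma int_matrix_Jmat: "int_matrix Jmat"
  unfolding int_matrix_def Jmat_def blockmat_def mat_def by (auto split: sum.split)

lemma int_matrix_blocks:
  assumes "int_matrix g"
  shows "int_matrix (blkA g)" "int_matrix (blkB g)" "int_matrix (blkC g)" "int_matrix (blkD g)"
  using assms by (auto simp: int_matrix_def blkA_def blkB_def blkC_def blkD_def)

lemma congr_mat_refl: "congr_mat N M M"
  unfolding congr_mat_def by (auto intro: congr_refl)

lemma congr_mat_uminus: "congr_mat N M P \<Longrightarrow> congr_mat N (- M) (- P)"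
  unfolding congr_mat_def by (auto intro: congr_uminus)

lemma congr_mat_transpose: "congr_mat N M P \<Longrightarrow> congr_mat N (transpose M) (transpose P)"
  unfolding congr_mat_def transpose_def by auto

lemma congr_mat_dvd: "congr_mat (N * M) X Y \<Longrightarrow> congr_mat N X Y"
  unfolding congr_mat_def by (auto intro: congr_dvd)

lemma congr_mat_mult:
  assumes "int_matrix M1" "int_matrix P2" "congr_mat N M1 P1" "congr_mat N M2 P2"
  shows "congr_mat N (M1 ** M2) (P1 ** P2)"
  using assms unfolding congr_mat_def int_matrix_def matrix_matrix_mult_def
  by (simp add: congr_sum congr_mult)

lemma congr_mat_mult_mat1:
  assumes "int_matrix g" "congr_mat N g (mat 1)" "congr_mat N h (mat 1)"
  shows "congr_mat N (g ** h) (mat 1)"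
  using congr_mat_mult[OF assms(1) int_matrix_mat1 assms(2,3)] by simp

lemma int_matrix_congr_quotient:
  assumes "congr_mat N M P"
  shows "int_matrix ((1 / of_int N) *\<^sub>R (P - M))"
  unfolding int_matrix_def
proof (intro allI)
  fix i j
  obtain k where "M $ i $ j - P $ i $ j = of_int (N * k)"
    using assms by (auto simp: congr_mat_def congr_def)
  then have "((1 / of_int N) *\<^sub>R (P - M)) $ i $ j = of_int (if N = 0 then 0 else - k)"
    by (simp add: field_simps)
  then show "((1 / of_int N) *\<^sub>R (P - M)) $ i $ j \<in> \<int>" by simp
qed

lemma congr_mat_blocks:
  assumes "congr_mat N g (mat 1)"
  shows "congr_mat N (blkA g) (mat 1)" "congr_mat N (blkB g) 0"
    "congr_mat N (blkC g) 0" "congr_mat N (blkD g) (mat 1)"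
proof -
  have c: "congr N (g $ i $ j) (mat 1 $ i $ j)" for i j
    using assms by (simp add: congr_mat_def)
  show "congr_mat N (blkA g) (mat 1)" "congr_mat N (blkB g) 0"
    "congr_mat N (blkC g) 0" "congr_mat N (blkD g) (mat 1)"
    using c[of "Inl i" "Inl j" for i j] c[of "Inl i" "Inr j" for i j]
      c[of "Inr i" "Inl j" for i j] c[of "Inr i" "Inr j" for i j]
    by (simp_all add: congr_mat_def blkA_def blkB_def blkC_def blkD_def mat_def)
qed

lemma congr_mat_from_blocks:
  assumes "congr_mat N (blkA g) (mat 1)" "congr_mat N (blkB g) 0"
    "congr_mat N (blkC g) 0" "congr_mat N (blkD g) (mat 1)"
  shows "congr_mat N g (mat 1)"
  unfolding congr_mat_def
proof (intro allI)
  fix i j :: "'a + 'a"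
  show "congr N (g $ i $ j) (mat 1 $ i $ j)"
    using assms by (cases i; cases j) (auto simp: congr_mat_def blkA_def blkB_def blkC_def blkD_def mat_def)
qed

lemma Gamma_princ_symplectic: "g \<in> Gamma_princ N \<Longrightarrow> symplectic g"
  by (simp add: Gamma_princ_def Sp_Z_def)

lemma Gamma_princ_mult: "g \<in> Gamma_princ N \<Longrightarrow> h \<in> Gamma_princ N \<Longrightarrow> g ** h \<in> Gamma_princ N"
  by (auto simp: Gamma_princ_def Sp_Z_def intro: symplectic_mult int_matrix_mult congr_mat_mult_mat1)

lemma Gamma_princ_sp_inv:
  assumes "g \<in> Gamma_princ N"
  shows "sp_inv g \<in> Gamma_princ N"
proof -
  have g: "symplectic g" "int_matrix g" "congr_mat (int N) g (mat 1)"
    using assms by (simp_all add: Gamma_princ_def Sp_Z_def)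
  have "int_matrix (Jmat ** transpose g)"
    by (intro int_matrix_mult int_matrix_Jmat int_matrix_transpose g(2))
  moreover have "congr_mat (int N) (Jmat ** transpose g) (Jmat ** mat 1)"
    using congr_mat_mult[OF int_matrix_Jmat int_matrix_mat1 congr_mat_refl
        congr_mat_transpose[OF g(3), simplified]] .
  ultimately have "congr_mat (int N) (Jmat ** transpose g ** Jmat) (Jmat ** mat 1 ** Jmat)"
    using congr_mat_mult[OF _ int_matrix_Jmat _ congr_mat_refl] by blast
  then have "congr_mat (int N) (sp_inv g) (mat 1)"
    using congr_mat_uminus by (fastforce simp: sp_inv_def Jmat_square)
  moreover have "int_matrix (sp_inv g)"
    by (simp add: sp_inv_def int_matrix_uminus int_matrix_mult int_matrix_Jmat
        int_matrix_transpose g(2))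
  ultimately show ?thesis
    using symplectic_sp_inv[OF g(1)] by (simp add: Gamma_princ_def Sp_Z_def)
qed

lemma Gamma_princ_mult_subset: "Gamma_princ (N * k) \<subseteq> Gamma_princ N"
  using congr_mat_dvd[of "int N" "int k"] by (auto simp: Gamma_princ_def)

lemma Gamma_2m_2_subset_Gamma_princ_2: "Gamma_2m_2 m \<subseteq> Gamma_princ 2"
proof
  fix g assume g: "g \<in> Gamma_2m_2 m"
  then have "congr_mat 2 (blkB g) 0" "congr_mat 2 (blkC g) 0"
    using congr_mat_dvd[of 2 "int m"] by (auto simp: Gamma_2m_2_def)
  with g show "g \<in> Gamma_princ 2"
    by (auto simp: Gamma_2m_2_def Gamma_princ_def intro: congr_mat_from_blocks)
qed

section \<open>The action on complex matrices\<close>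

definition icmat :: "real^'m^'k \<Rightarrow> complex^'m^'k" where
  "icmat Y = (\<chi> i j. \<i> * cmat Y $ i $ j)"

lemma iCn_eq_image_icmat: "iCn = icmat ` Cn"
  by (auto simp: iCn_def icmat_def)

lemma cmat_mult: "cmat (A ** B) = cmat A ** cmat B"
  by (simp add: cmat_def matrix_matrix_mult_def vec_eq_iff)

lemma cmat_add: "cmat (A + B) = cmat A + cmat B"
  by (simp add: cmat_def vec_eq_iff)

lemma cmat_uminus: "cmat (- A) = - cmat A"
  by (simp add: cmat_def vec_eq_iff)

lemma cmat_mat1: "cmat (mat 1) = mat 1"
  by (simp add: cmat_def vec_eq_iff mat_def)

lemma cmat_zero: "cmat 0 = 0"
  by (simp add: cmat_def vec_eq_iff)

lemma cmat_mult_icmat: "cmat X ** icmat Y = icmat (X ** Y)"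
  by (simp add: cmat_def icmat_def matrix_matrix_mult_def vec_eq_iff sum_distrib_left mult_ac)

lemma icmat_mult_cmat: "icmat X ** cmat Y = icmat (X ** Y)"
  by (simp add: cmat_def icmat_def matrix_matrix_mult_def vec_eq_iff sum_distrib_left mult_ac)

lemma icmat_mult_icmat: "icmat X ** icmat Y = - cmat (X ** Y)"
  by (simp add: cmat_def icmat_def matrix_matrix_mult_def vec_eq_iff sum_distrib_left mult_ac
      sum_negf[symmetric])

lemma icmat_add_cmat_eq_iff: "icmat X + cmat Y = icmat X' + cmat Y' \<longleftrightarrow> X = X' \<and> Y = Y'"
  by (auto simp: icmat_def cmat_def vec_eq_iff complex_eq_iff)

lemma Re_icmat_add_cmat_mult:
  "(\<chi> k. Re (((icmat X + cmat D) *v v) $ k)) = D *v (\<chi> k. Re (v $ k)) - X *v (\<chi> k. Im (v $ k))"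
  by (simp add: vec_eq_iff matrix_vector_mult_def icmat_def cmat_def sum_subtractf[symmetric]
      algebra_simps)

lemma Im_icmat_add_cmat_mult:
  "(\<chi> k. Im (((icmat X + cmat D) *v v) $ k)) = X *v (\<chi> k. Re (v $ k)) + D *v (\<chi> k. Im (v $ k))"
  by (simp add: vec_eq_iff matrix_vector_mult_def icmat_def cmat_def sum.distrib[symmetric]
      algebra_simps)

definition sp_num :: "'n::finite smat \<Rightarrow> complex^'n^'n \<Rightarrow> complex^'n^'n" where
  "sp_num g Z = cmat (blkA g) ** Z + cmat (blkB g)"

definition sp_den :: "'n::finite smat \<Rightarrow> complex^'n^'n \<Rightarrow> complex^'n^'n" where
  "sp_den g Z = cmat (blkC g) ** Z + cmat (blkD g)"

lemma sp_act_num_den: "sp_act g Z = sp_num g Z ** matrix_inv (sp_den g Z)"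
  by (simp add: sp_act_def sp_num_def sp_den_def)

lemma sp_num_mult: "sp_num (g ** h) Z = cmat (blkA g) ** sp_num h Z + cmat (blkB g) ** sp_den h Z"
  by (simp add: sp_num_def sp_den_def blk_mult cmat_add cmat_mult matrix_add_ldistrib
      matrix_add_rdistrib matrix_mul_assoc add_ac)

lemma sp_den_mult: "sp_den (g ** h) Z = cmat (blkC g) ** sp_num h Z + cmat (blkD g) ** sp_den h Z"
  by (simp add: sp_num_def sp_den_def blk_mult cmat_add cmat_mult matrix_add_ldistrib
      matrix_add_rdistrib matrix_mul_assoc add_ac)

lemma sp_act_mult:
  assumes "invertible (sp_den h Z)" and "invertible (sp_den (g ** h) Z)"
  shows "sp_act (g ** h) Z = sp_act g (sp_act h Z)"
proof -
  define W where "W = sp_den h Z"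
  define V where "V = sp_den (g ** h) Z"
  have W: "W ** matrix_inv W = mat 1" "matrix_inv W ** W = mat 1"
    using invertible_matrix_inv[OF assms(1)] by (simp_all add: W_def)
  have V: "V ** matrix_inv V = mat 1" "matrix_inv V ** V = mat 1"
    using invertible_matrix_inv[OF assms(2)] by (simp_all add: V_def)
  have num: "sp_num g (sp_act h Z) = sp_num (g ** h) Z ** matrix_inv W"
    by (simp add: sp_num_mult sp_act_num_den sp_num_def[of g] W_def[symmetric]
        matrix_add_rdistrib matrix_mul_assoc[symmetric] W)
  have den: "sp_den g (sp_act h Z) = V ** matrix_inv W"
    by (simp add: sp_den_mult sp_act_num_den sp_den_def[of g] W_def[symmetric] V_def
        matrix_add_rdistrib matrix_mul_assoc[symmetric] W)
  have cancel_W: "matrix_inv W ** (W ** X) = X" and cancel_V: "matrix_inv V ** (V ** X) = X" for X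
    by (simp_all add: matrix_mul_assoc W V)
  have inv: "matrix_inv (V ** matrix_inv W) = W ** matrix_inv V"
    by (rule matrix_inv_unique) (simp_all add: matrix_mul_assoc[symmetric] cancel_W cancel_V W V)
  have "sp_act g (sp_act h Z) = sp_num g (sp_act h Z) ** matrix_inv (sp_den g (sp_act h Z))"
    by (rule sp_act_num_den)
  also have "\<dots> = sp_num (g ** h) Z ** matrix_inv W ** (W ** matrix_inv V)"
    by (simp only: num den inv)
  also have "\<dots> = sp_act (g ** h) Z"
    by (simp add: matrix_mul_assoc[symmetric] cancel_W sp_act_num_den V_def)
  finally show ?thesis ..
qed

lemma sp_act_mat1: "sp_act (mat 1) Z = (Z :: complex^'n::finite^'n)"
proof -
  have "matrix_inv (mat 1 :: complex^'n^'n) = mat 1"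
    by (rule matrix_inv_unique) simp_all
  then show ?thesis
    by (simp add: sp_act_num_den sp_num_def sp_den_def blk_mat1 cmat_mat1 cmat_zero)
qed

lemma sp_num_icmat: "sp_num g (icmat Y) = icmat (blkA g ** Y) + cmat (blkB g)"
  by (simp add: sp_num_def cmat_mult_icmat)

lemma sp_den_icmat: "sp_den g (icmat Y) = icmat (blkC g ** Y) + cmat (blkD g)"
  by (simp add: sp_den_def cmat_mult_icmat)

lemma invertible_sp_den_icmat:
  fixes g :: "'n::finite smat"
  assumes g: "symplectic g" and Y: "pos_def Y"
  shows "invertible (sp_den g (icmat Y))"
proof -
  let ?A = "blkA g" and ?B = "blkB g" and ?C = "blkC g" and ?D = "blkD g"
  have "v = 0" if v: "sp_den g (icmat Y) *v v = 0" for v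
  proof -
    txt \<open>For v = a + ib, g maps p = (-Yb, a) and q = (Ya, b) into the Lagrangian
      \<real>^n \<times> 0, so the symplectic form of p and q, which is -(a Ya + b Yb), vanishes.\<close>
    define a where "a = (\<chi> k. Re (v $ k))"
    define b where "b = (\<chi> k. Im (v $ k))"
    have "(\<chi> k. Re ((sp_den g (icmat Y) *v v) $ k)) = 0"
      using v by (simp add: vec_eq_iff)
    then have re: "?D *v a - ?C *v (Y *v b) = 0"
      by (simp add: sp_den_icmat Re_icmat_add_cmat_mult a_def b_def matrix_vector_mul_assoc)
    have "(\<chi> k. Im ((sp_den g (icmat Y) *v v) $ k)) = 0"
      using v by (simp add: vec_eq_iff)
    then have im: "?C *v (Y *v a) + ?D *v b = 0"
      by (simp add: sp_den_icmat Im_icmat_add_cmat_mult a_def b_def matrix_vector_mul_assoc)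
    define p where "p = blockvec (- (Y *v b)) a"
    define q where "q = blockvec (Y *v a) b"
    have gp: "g *v p = blockvec (?B *v a - ?A *v (Y *v b)) 0"
      using re by (simp add: p_def matrix_vector_mult_blockvec matrix_vector_mult_uminus_right)
    have gq: "g *v q = blockvec (?A *v (Y *v a) + ?B *v b) 0"
      using im by (simp add: q_def matrix_vector_mult_blockvec)
    have "- (a \<bullet> (Y *v a) + b \<bullet> (Y *v b)) = p \<bullet> (Jmat *v q)"
      by (simp add: p_def q_def Jmat_blockvec inner_blockvec inner_commute)
    also have "\<dots> = (g *v p) \<bullet> (Jmat *v (g *v q))"
      by (rule symplectic_form_invariant[OF g, symmetric])
    also have "\<dots> = 0"
      by (simp add: gp gq Jmat_blockvec inner_blockvec)
    finally have "a \<bullet> (Y *v a) + b \<bullet> (Y *v b) = 0" by simp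
    then have "a = 0" "b = 0"
      using pos_def_nonneg[OF Y, of a] pos_def_nonneg[OF Y, of b] pos_def_eq_0_iff[OF Y]
      by (metis add_nonneg_eq_0_iff)+
    then show "v = 0" by (simp add: a_def b_def vec_eq_iff complex_eq_iff)
  qed
  then show ?thesis
    by (simp add: invertible_left_inverse matrix_left_invertible_ker)
qed

lemma sp_act_mult_icmat:
  assumes "symplectic g" "symplectic h" "pos_def Y"
  shows "sp_act (g ** h) (icmat Y) = sp_act g (sp_act h (icmat Y))"
  using assms by (intro sp_act_mult invertible_sp_den_icmat symplectic_mult)

lemma sp_act_inv_mult_icmat:
  assumes "symplectic g" "symplectic g'" "pos_def Y" "pos_def Y'"
    and "sp_act g (icmat Y) = sp_act g' (icmat Y')"
  shows "sp_act (sp_inv g ** g') (icmat Y') = icmat Y"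
proof -
  have "sp_act (sp_inv g ** g') (icmat Y') = sp_act (sp_inv g) (sp_act g (icmat Y))"
    using assms by (simp add: sp_act_mult_icmat symplectic_sp_inv)
  also have "\<dots> = sp_act (sp_inv g ** g) (icmat Y)"
    using assms by (simp add: sp_act_mult_icmat symplectic_sp_inv)
  also have "\<dots> = icmat Y"
    using sp_inv_left[OF assms(1)] by (simp add: sp_act_mat1)
  finally show ?thesis .
qed

lemma sp_act_icmat_eq_icmat_blocks:
  assumes "symplectic h" "pos_def Y2" "sp_act h (icmat Y2) = icmat Y1"
  shows "blkA h ** Y2 = Y1 ** blkD h" "blkB h = - (Y1 ** blkC h ** Y2)"
proof -
  let ?W = "sp_den h (icmat Y2)"
  have "sp_num h (icmat Y2) = sp_act h (icmat Y2) ** ?W"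
    using invertible_matrix_inv[OF invertible_sp_den_icmat[OF assms(1,2)]]
    by (simp add: sp_act_num_den matrix_mul_assoc[symmetric])
  also have "\<dots> = icmat (Y1 ** blkD h) + cmat (- (Y1 ** blkC h ** Y2))"
    by (simp add: assms(3) sp_den_icmat matrix_add_ldistrib icmat_mult_icmat icmat_mult_cmat
        cmat_uminus matrix_mul_assoc add.commute)
  finally show "blkA h ** Y2 = Y1 ** blkD h" "blkB h = - (Y1 ** blkC h ** Y2)"
    by (simp_all add: sp_num_icmat icmat_add_cmat_eq_iff)
qed

section \<open>Integral contractions of a positive definite form\<close>

definition int_vector :: "real^'n \<Rightarrow> bool" where
  "int_vector v \<longleftrightarrow> (\<forall>i. v $ i \<in> \<int>)"

lemma int_vector_matrix_vector_mult: "int_matrix A \<Longrightarrow> int_vector v \<Longrightarrow> int_vector (A *v v)"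
  unfolding int_matrix_def int_vector_def matrix_vector_mult_def by (auto intro!: Ints_sum Ints_mult)

lemma pos_def_lattice_lower_bound:
  fixes Y :: "real^'n::finite^'n"
  assumes Y: "pos_def Y"
  obtains c where "c > 0" "\<And>v. int_vector v \<Longrightarrow> v \<noteq> 0 \<Longrightarrow> c \<le> v \<bullet> (Y *v v)"
proof -
  let ?S = "sphere (0::real^'n) 1"
  let ?f = "\<lambda>x. x \<bullet> (Y *v x)"
  have "axis undefined 1 \<in> ?S" by simp
  then have "?S \<noteq> {}" by blast
  moreover have "continuous_on ?S ?f"
    by (intro continuous_intros)
  ultimately obtain x0 where x0: "x0 \<in> ?S" "\<And>y. y \<in> ?S \<Longrightarrow> ?f x0 \<le> ?f y"
    using continuous_attains_inf[OF compact_sphere] by blast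
  then have "x0 \<noteq> 0" by auto
  then have c0: "?f x0 > 0" using Y by (simp add: pos_def_def)
  have "?f x0 \<le> ?f v" if "int_vector v" "v \<noteq> 0" for v
  proof -
    obtain i where "v $ i \<noteq> 0" using \<open>v \<noteq> 0\<close> by (auto simp: vec_eq_iff)
    then have "1 \<le> \<bar>v $ i\<bar>"
      using \<open>int_vector v\<close> Ints_nonzero_abs_ge1 by (auto simp: int_vector_def)
    also have "\<dots> \<le> norm v" by (rule component_le_norm_cart)
    finally have "1 \<le> (norm v)\<^sup>2" by (simp add: one_le_power)
    define u where "u = (1 / norm v) *\<^sub>R v"
    have "u \<in> ?S" using \<open>v \<noteq> 0\<close> by (simp add: u_def)
    then have "?f x0 \<le> ?f u" using x0 by blast
    have "v = norm v *\<^sub>R u" using \<open>v \<noteq> 0\<close> by (simp add: u_def)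
    then have "?f v = (norm v)\<^sup>2 * ?f u"
      by (metis inner_scaleR_left inner_scaleR_right matrix_vector_mult_scaleR mult.assoc power2_eq_square)
    moreover have "?f u \<le> (norm v)\<^sup>2 * ?f u"
      using \<open>1 \<le> (norm v)\<^sup>2\<close> \<open>?f x0 \<le> ?f u\<close> c0 mult_right_mono[of 1 "(norm v)\<^sup>2" "?f u"] by simp
    ultimately show ?thesis using \<open>?f x0 \<le> ?f u\<close> by linarith
  qed
  with c0 show ?thesis using that by blast
qed

lemma self_adjoint_funpow_eq_0_imp_eq_0:
  fixes K Y :: "real^'n::finite^'n"
  assumes Y: "pos_def Y" and self_adj: "transpose (Y ** K) = Y ** K"
    and "((*v) K ^^ j) x = 0"
  shows "K *v x = 0"
  using assms(3)
proof (induction j arbitrary: x)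
  case (Suc j)
  have "((*v) K ^^ j) (K *v x) = 0"
    using Suc.prems by (simp only: funpow_Suc_right o_def)
  then have "K *v (K *v x) = 0" by (rule Suc.IH)
  have "(K *v x) \<bullet> (Y *v (K *v x)) = ((Y ** K) *v x) \<bullet> (K *v x)"
    by (simp add: inner_commute matrix_vector_mul_assoc)
  also have "\<dots> = x \<bullet> ((Y ** K) *v (K *v x))"
    by (simp only: inner_matrix_vector_transpose self_adj)
  also have "\<dots> = 0"
    using \<open>K *v (K *v x) = 0\<close> by (simp add: matrix_vector_mul_assoc[symmetric])
  finally show ?case using pos_def_eq_0_iff[OF Y] by simp
qed simp

lemma int_matrix_contraction_eq_0:
  fixes K Y :: "real^'n::finite^'n"
  assumes Y: "pos_def Y" and K: "int_matrix K" and self_adj: "transpose (Y ** K) = Y ** K"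
    and contr: "\<And>x. (K *v x) \<bullet> (Y *v (K *v x)) \<le> q * (x \<bullet> (Y *v x))" and "q < 1"
  shows "K = 0"
proof -
  define Q where "Q x = x \<bullet> (Y *v x)" for x
  have "0 \<le> q"
  proof -
    have "0 < Q (axis undefined 1)" using Y by (simp add: Q_def pos_def_def)
    moreover have "0 \<le> q * Q (axis undefined 1)"
      using contr pos_def_nonneg[OF Y] unfolding Q_def by (meson order_trans)
    ultimately show ?thesis by (simp add: zero_le_mult_iff)
  qed
  have iter: "Q (((*v) K ^^ j) x) \<le> q ^ j * Q x" for j x
  proof (induction j)
    case (Suc j)
    have "Q (((*v) K ^^ Suc j) x) \<le> q * Q (((*v) K ^^ j) x)"
      using contr by (simp add: Q_def)
    also have "\<dots> \<le> q * (q ^ j * Q x)"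
      using Suc \<open>0 \<le> q\<close> by (rule mult_left_mono)
    finally show ?case by (simp add: mult.assoc)
  qed simp
  obtain c where "c > 0" and c: "\<And>v. int_vector v \<Longrightarrow> v \<noteq> 0 \<Longrightarrow> c \<le> Q v"
    using pos_def_lattice_lower_bound[OF Y] unfolding Q_def by blast
  have eventually_0: "\<exists>j. ((*v) K ^^ j) x = 0" if "int_vector x" for x
  proof -
    have "(\<lambda>j. q ^ j * Q x) \<longlonglongrightarrow> 0"
      using \<open>0 \<le> q\<close> \<open>q < 1\<close> by (intro tendsto_mult_left_zero LIMSEQ_power_zero) simp
    then have "\<forall>\<^sub>F j in sequentially. q ^ j * Q x < c"
      using \<open>c > 0\<close> by (rule order_tendstoD(2))
    then obtain j where "q ^ j * Q x < c"
      unfolding eventually_sequentially by blast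
    moreover have "int_vector (((*v) K ^^ j) x)"
      using that by (induction j) (auto intro: int_vector_matrix_vector_mult[OF K])
    ultimately show ?thesis using c iter[of j x] by fastforce
  qed
  have "K *v axis k 1 = 0" for k
  proof -
    have "int_vector (axis k (1::real))" by (simp add: int_vector_def axis_def)
    then show ?thesis
      using eventually_0 self_adjoint_funpow_eq_0_imp_eq_0[OF Y self_adj] by blast
  qed
  then show "K = 0"
    by (simp add: vec_eq_iff matrix_vector_mult_basis column_def)
qed

lemma quadratic_form_square_le:
  fixes T Y :: "real^'n::finite^'n"
  assumes self_adj: "transpose (Y ** T) = Y ** T"
    and nonneg: "\<And>x. 0 \<le> x \<bullet> (Y *v (T *v x))"
    and le_id: "\<And>x. 0 \<le> x \<bullet> (Y *v ((mat 1 - T) *v x))"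
  shows "(T *v x) \<bullet> (Y *v (T *v x)) \<le> x \<bullet> (Y *v x)"
proof -
  define b where "b u v = u \<bullet> (Y *v v)" for u v
  define u where "u = T *v x"
  have "b x (T *v u) = x \<bullet> ((Y ** T) *v u)"
    by (simp add: b_def matrix_vector_mul_assoc)
  also have "\<dots> = (transpose (Y ** T) *v x) \<bullet> u"
    by (simp only: inner_matrix_vector_transpose transpose_transpose)
  also have "\<dots> = b u u"
    by (simp add: self_adj b_def u_def inner_commute matrix_vector_mul_assoc)
  finally have sym: "b x (T *v u) = b u u" .
  have "0 \<le> b (x - u) (T *v (x - u))" using nonneg by (simp add: b_def)
  then have "0 \<le> b x u - b x (T *v u) - b u u + b u (T *v u)"
    by (simp add: b_def u_def matrix_vector_mult_diff_distrib inner_diff_left inner_diff_right)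
  moreover have "0 \<le> b u ((mat 1 - T) *v u)" using le_id by (simp add: b_def)
  then have "0 \<le> b u u - b u (T *v u)"
    by (simp add: b_def matrix_vector_mult_diff_rdistrib matrix_vector_mult_diff_distrib inner_diff_right)
  moreover have "0 \<le> b x ((mat 1 - T) *v x)" using le_id by (simp add: b_def)
  then have "0 \<le> b x x - b x u"
    by (simp add: b_def u_def matrix_vector_mult_diff_rdistrib matrix_vector_mult_diff_distrib inner_diff_right)
  ultimately show ?thesis
    using sym by (simp add: b_def u_def)
qed

lemma even_matrix_between_0_and_id_eq_0:
  fixes T Y :: "real^'n::finite^'n"
  assumes Y: "pos_def Y" and self_adj: "transpose (Y ** T) = Y ** T"
    and nonneg: "\<And>x. 0 \<le> x \<bullet> (Y *v (T *v x))"
    and le_id: "\<And>x. 0 \<le> x \<bullet> (Y *v ((mat 1 - T) *v x))"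
    and even: "int_matrix ((1/2) *\<^sub>R T)"
  shows "T = 0"
proof -
  have "(1/2) *\<^sub>R T = (0 :: real^'n^'n)"
  proof (rule int_matrix_contraction_eq_0[OF Y even])
    show "transpose (Y ** (1/2) *\<^sub>R T) = Y ** (1/2) *\<^sub>R T"
      using self_adj by (simp add: matrix_scalar_ac scalar_matrix_assoc[symmetric] transpose_scalar)
    show "((1/2) *\<^sub>R T *v x) \<bullet> (Y *v ((1/2) *\<^sub>R T *v x)) \<le> 1/4 * (x \<bullet> (Y *v x))" for x
      using quadratic_form_square_le[OF self_adj nonneg le_id, of x]
      by (simp add: scaleR_matrix_vector_assoc[symmetric] matrix_vector_mult_scaleR)
  qed simp
  then show ?thesis by simp
qed

lemma mod2_symplectic_blocks_C_eq_0:
  fixes A B C D Y1 Y2 :: "real^'n::finite^'n"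
  assumes Y1: "pos_def Y1" and Y2: "pos_def Y2"
    and "int_matrix A" "congr_mat 2 A (mat 1)" "congr_mat 2 D (mat 1)"
    and sympl: "transpose A ** D - transpose C ** B = mat 1"
    and eB: "B = - (Y1 ** C ** Y2)" and eA: "A ** Y2 = Y1 ** D"
  shows "C = 0"
proof -
  have tY1: "transpose Y1 = Y1" and tY2: "transpose Y2 = Y2"
    using Y1 Y2 by (simp_all add: pos_def_def)
  define T where "T = transpose C ** Y1 ** C ** Y2"
  have "transpose A ** D + T = mat 1"
    using sympl by (simp add: T_def eB matrix_minus_right matrix_mul_assoc)
  then have T_alt: "mat 1 - T = transpose A ** D" by (metis add_diff_cancel_right')
  have T_form: "x \<bullet> (Y2 *v (T *v x)) = (C *v (Y2 *v x)) \<bullet> (Y1 *v (C *v (Y2 *v x)))" for x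
  proof -
    have "T *v x = transpose C *v (Y1 *v (C *v (Y2 *v x)))"
      by (simp add: T_def matrix_vector_mul_assoc matrix_mul_assoc del: transpose_matrix_vector)
    then show ?thesis
      by (simp only: inner_symmetric_matrix[OF tY2] inner_matrix_vector_transpose transpose_transpose)
  qed
  have I_minus_T_form: "x \<bullet> (Y2 *v ((mat 1 - T) *v x)) = (D *v x) \<bullet> (Y1 *v (D *v x))" for x
  proof -
    have "x \<bullet> (Y2 *v ((mat 1 - T) *v x)) = (A *v (Y2 *v x)) \<bullet> (D *v x)"
      by (simp only: T_alt inner_symmetric_matrix[OF tY2] inner_matrix_vector_transpose
          matrix_vector_mul_assoc[symmetric] transpose_transpose)
    also have "A *v (Y2 *v x) = Y1 *v (D *v x)"
      by (simp add: matrix_vector_mul_assoc eA)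
    finally show ?thesis by (simp add: inner_commute)
  qed
  have "T = 0"
  proof (rule even_matrix_between_0_and_id_eq_0[OF Y2])
    show "transpose (Y2 ** T) = Y2 ** T"
      by (simp add: T_def matrix_transpose_mul tY1 tY2 matrix_mul_assoc)
    show "0 \<le> x \<bullet> (Y2 *v (T *v x))" for x
      using T_form pos_def_nonneg[OF Y1] by simp
    show "0 \<le> x \<bullet> (Y2 *v ((mat 1 - T) *v x))" for x
      using I_minus_T_form pos_def_nonneg[OF Y1] by simp
    have "congr_mat 2 (transpose A ** D) (mat 1)"
      using congr_mat_mult_mat1[OF int_matrix_transpose[OF assms(3)]
          congr_mat_transpose[OF assms(4), simplified] assms(5)] .
    then show "int_matrix ((1/2) *\<^sub>R T)"
      using int_matrix_congr_quotient[of 2 "transpose A ** D" "mat 1"] by (simp add: T_alt[symmetric])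
  qed
  then have "(C *v (Y2 *v x)) \<bullet> (Y1 *v (C *v (Y2 *v x))) = 0" for x
    using T_form[of x] by simp
  then have "(C ** Y2) *v x = 0" for x
    using pos_def_eq_0_iff[OF Y1] by (metis matrix_vector_mul_assoc)
  then show "C = 0" using pos_def_mult_right_cancel[OF Y2] by blast
qed

section \<open>Level-2 elements moving a point of iC_n into iC_n\<close>

lemma block_diagonal_Gamma_princ_2_eq_embed_GL:
  fixes h :: "'n::finite smat"
  assumes "h \<in> Gamma_princ 2" "blkB h = 0" "blkC h = 0"
  shows "blkA h \<in> Gamma_l_2" "h = embed_GL (blkA h)"
proof -
  let ?A = "blkA h" and ?D = "blkD h"
  have h: "symplectic h" "int_matrix h" "congr_mat 2 h (mat 1)"
    using assms(1) by (simp_all add: Gamma_princ_def Sp_Z_def)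
  have "transpose ?A ** ?D = mat 1"
    using symplectic_blocks[OF h(1)] assms(2,3) by simp
  then have DA: "transpose ?D ** ?A = mat 1"
    by (metis matrix_transpose_mul transpose_mat transpose_transpose)
  then have AD: "?A ** transpose ?D = mat 1"
    using matrix_left_right_inverse by blast
  show "?A \<in> Gamma_l_2"
    using AD DA congr_mat_blocks(1)[OF h(3)] int_matrix_blocks[OF h(2)]
    by (auto simp: Gamma_l_2_def GL_Z_def intro: int_matrix_transpose)
  have "matrix_inv ?A = transpose ?D"
    by (rule matrix_inv_unique[OF AD DA])
  then show "h = embed_GL ?A"
    by (metis embed_GL_def blockmat_blk assms(2,3) transpose_transpose)
qed

lemma Gamma_princ_2_iCn_transporter_eq_embed_GL:
  fixes h :: "'n::finite smat"
  assumes "h \<in> Gamma_princ 2" "pos_def Y1" "pos_def Y2" "sp_act h (icmat Y2) = icmat Y1"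
  shows "\<exists>\<alpha> \<in> Gamma_l_2. h = embed_GL \<alpha>"
proof -
  have h: "symplectic h" "int_matrix h" "congr_mat 2 h (mat 1)"
    using assms(1) by (simp_all add: Gamma_princ_def Sp_Z_def)
  note rel = sp_act_icmat_eq_icmat_blocks[OF h(1) assms(3,4)]
  have "blkC h = 0"
    using assms(2,3) int_matrix_blocks[OF h(2)] congr_mat_blocks[OF h(3)]
      symplectic_blocks[OF h(1)] rel
    by (intro mod2_symplectic_blocks_C_eq_0[of Y1 Y2 "blkA h" "blkD h" "blkC h" "blkB h"])
  moreover have "blkB h = 0" using rel(2) calculation by simp
  ultimately show ?thesis
    using block_diagonal_Gamma_princ_2_eq_embed_GL assms(1) by blast
qed

theorem lemma4p10:
  fixes m :: nat and g1 g2 \<gamma> :: "'n::finite smat" and Z1 Z2 :: "complex^'n^'n"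
  assumes "m \<ge> 1"
    and "g1 \<in> Gamma_2m_2 m" and "g2 \<in> Gamma_2m_2 m"
    and "Z1 \<in> sp_act g1 ` iCn" and "Z2 \<in> sp_act g2 ` iCn"
    and "\<gamma> \<in> Gamma_princ (4 * m)"
    and "sp_act \<gamma> Z1 = Z2"
  shows "\<exists>\<alpha> \<in> Gamma_l_2. g2 = \<gamma> ** g1 ** embed_GL \<alpha>"
proof -
  obtain Y1 Y2 where Y: "pos_def Y1" "pos_def Y2"
    and Z: "Z1 = sp_act g1 (icmat Y1)" "Z2 = sp_act g2 (icmat Y2)"
    using assms(4,5) by (auto simp: iCn_eq_image_icmat Cn_def)
  have level2: "\<gamma> \<in> Gamma_princ 2" "g1 \<in> Gamma_princ 2" "g2 \<in> Gamma_princ 2"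
    using assms(2,3,6) Gamma_princ_mult_subset[of 2 "2 * m"] Gamma_2m_2_subset_Gamma_princ_2
    by (auto simp: mult.assoc)
  define g where "g = \<gamma> ** g1"
  define h where "h = sp_inv g ** g2"
  have g: "g \<in> Gamma_princ 2" and h: "h \<in> Gamma_princ 2"
    using level2 by (simp_all add: g_def h_def Gamma_princ_mult Gamma_princ_sp_inv)
  have "sp_act g (icmat Y1) = sp_act g2 (icmat Y2)"
    using sp_act_mult_icmat[of \<gamma> g1 Y1] level2 Y assms(7) Z
    by (simp add: g_def Gamma_princ_symplectic)
  then have "sp_act h (icmat Y2) = icmat Y1"
    unfolding h_def using g level2 Y by (intro sp_act_inv_mult_icmat Gamma_princ_symplectic)
  then obtain \<alpha> where "\<alpha> \<in> Gamma_l_2" "h = embed_GL \<alpha>"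
    using Gamma_princ_2_iCn_transporter_eq_embed_GL h Y by blast
  moreover have "g ** h = g2"
    using sp_inv_right[OF Gamma_princ_symplectic[OF g]] by (simp add: h_def matrix_mul_assoc)
  ultimately show ?thesis by (auto simp: g_def)
qed

end
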